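(* Let $\mathbb{A}=(A,\backslash,/)$ be a residuation algebra. If $\mathbb{A}$ satisfies $a\backslash(b\vee c)\leq(a\backslash b)\vee(a\backslash c)$ for all $a,b,c\in A$, then the dual structure $\mathbb{A}^\delta_+$ is functional, i.e. for all $y,z\in J^\infty(A^\delta)$, $y\cdot z\in J^\infty(A^\delta)\cup\{\bot\}$.
   Context: A residuation algebra is a structure $(A,\backslash,/)$ where $A$ is a bounded distributive lattice and $\backslash,/$ are binary operations on $A$ such that $\backslash$ preserves finite (including empty) meets in its second coordinate, $/$ preserves finite (including empty) meets in its first coordinate, and for all $a,b,c\in A$: $b\leq a\backslash c$ iff $a\leq c/b$. The canonical extension $A^\delta$ of $A$ is the complete lattice containing $A$ as a sublattice that is dense (every element is a join of meets and a meet of joins of elements of $A$) and compact (if $\bigwedge S\leq\bigvee T$ for $S,T\subseteq A$ then this holds for some finite subsets). Let $K(A^\delta)$ (resp. $O(A^\delta)$) be the set of meets (resp. joins) of subsets of $A$. The $\pi$-extension of $\backslash$ is defined by: for $k\in K(A^\delta)$, $o\in O(A^\delta)$, $k\backslash^\pi o=\bigvee\{a\backslash b\mid a,b\in A,\ k\leq a,\ b\leq o\}$, and for arbitrary $u,v\in A^\delta$, $u\backslash^\pi v=\bigwedge\{k\backslash^\pi o\mid k\in K(A^\delta),\ o\in O(A^\delta),\ k\leq u,\ v\leq o\}$; the $\pi$-extension $/^\pi$ of $/$ is defined symmetrically ($/$ being monotone in its first and antitone in its second coordinate). There is a binary operation $\cdot$ on $A^\delta$, completely join-preserving in each coordinate,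 such that for all $u,v,w\in A^\delta$: $v\leq u\backslash^\pi w$ iff $u\cdot v\leq w$ iff $u\leq w/^\pi v$. $J^\infty(A^\delta)$ is the set of completely join-irreducible elements of $A^\delta$ (those $x$ with $x=\bigvee S\Rightarrow x\in S$ for all $S\subseteq A^\delta$). The dual structure $\mathbb{A}^\delta_+$ is $(J^\infty(A^\delta),\geq,R)$ with $R(x,y,z)$ iff $x\leq y\cdot z$; it is called functional if $y\cdot z\in J^\infty(A^\delta)\cup\{\bot\}$ for all $y,z\in J^\infty(A^\delta)$. *)

theory Defs
  imports Main
begin

text \<open>Residuation algebra on a bounded distributive lattice 'a:
  ldiv a c stands for a \ c, rdiv c b stands for c / b.\<close>
definition residuation_algebra ::
  "('a::{distrib_lattice,bounded_lattice} \<Rightarrow> 'a \<Rightarrow> 'a) \<Rightarrow> ('a \<Rightarrow> 'a \<Rightarrow> 'a) \<Rightarrow> bool" where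
  "residuation_algebra ldiv rdiv \<longleftrightarrow>
     (\<forall>a. ldiv a top = top) \<and>
     (\<forall>a b c. ldiv a (inf b c) = inf (ldiv a b) (ldiv a c)) \<and>
     (\<forall>b. rdiv top b = top) \<and>
     (\<forall>a c b. rdiv (inf a c) b = inf (rdiv a b) (rdiv c b)) \<and>
     (\<forall>a b c. b \<le> ldiv a c \<longleftrightarrow> a \<le> rdiv c b)"

definition canonical_extension ::
  "('a::{distrib_lattice,bounded_lattice} \<Rightarrow> 'b::complete_lattice) \<Rightarrow> bool" where
  "canonical_extension e \<longleftrightarrow>
     inj e \<and>
     (\<forall>a b. e (inf a b) = inf (e a) (e b)) \<and>
     (\<forall>a b. e (sup a b) = sup (e a) (e b)) \<and>
     e top = top \<and> e bot = bot \<and>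
     (\<forall>u. \<exists>\<S>. u = Sup ((\<lambda>S. Inf (e ` S)) ` \<S>)) \<and>
     (\<forall>u. \<exists>\<T>. u = Inf ((\<lambda>T. Sup (e ` T)) ` \<T>)) \<and>
     (\<forall>S T. Inf (e ` S) \<le> Sup (e ` T) \<longrightarrow>
        (\<exists>S' T'. finite S' \<and> finite T' \<and> S' \<subseteq> S \<and> T' \<subseteq> T \<and>
                 Inf (e ` S') \<le> Sup (e ` T')))"

definition closed_elems :: "('a \<Rightarrow> 'b::complete_lattice) \<Rightarrow> 'b set" where
  "closed_elems e = {Inf (e ` S) | S. True}"

definition open_elems :: "('a \<Rightarrow> 'b::complete_lattice) \<Rightarrow> 'b set" where
  "open_elems e = {Sup (e ` T) | T. True}"

text \<open>pi-extension of \ (antitone in first, monotone in second argument).\<close>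
definition ldiv_KO :: "('a \<Rightarrow> 'b::complete_lattice) \<Rightarrow> ('a \<Rightarrow> 'a \<Rightarrow> 'a) \<Rightarrow> 'b \<Rightarrow> 'b \<Rightarrow> 'b" where
  "ldiv_KO e ldiv k p = Sup {e (ldiv a b) | a b. k \<le> e a \<and> e b \<le> p}"

definition ldiv_pi :: "('a \<Rightarrow> 'b::complete_lattice) \<Rightarrow> ('a \<Rightarrow> 'a \<Rightarrow> 'a) \<Rightarrow> 'b \<Rightarrow> 'b \<Rightarrow> 'b" where
  "ldiv_pi e ldiv u v = Inf {ldiv_KO e ldiv k p | k p.
      k \<in> closed_elems e \<and> p \<in> open_elems e \<and> k \<le> u \<and> v \<le> p}"

text \<open>pi-extension of / (monotone in first, antitone in second argument).\<close>
definition rdiv_OK :: "('a \<Rightarrow> 'b::complete_lattice) \<Rightarrow> ('a \<Rightarrow> 'a \<Rightarrow> 'a) \<Rightarrow> 'b \<Rightarrow> 'b \<Rightarrow> 'b" where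
  "rdiv_OK e rdiv p k = Sup {e (rdiv a b) | a b. e a \<le> p \<and> k \<le> e b}"

definition rdiv_pi :: "('a \<Rightarrow> 'b::complete_lattice) \<Rightarrow> ('a \<Rightarrow> 'a \<Rightarrow> 'a) \<Rightarrow> 'b \<Rightarrow> 'b \<Rightarrow> 'b" where
  "rdiv_pi e rdiv u v = Inf {rdiv_OK e rdiv p k | p k.
      p \<in> open_elems e \<and> k \<in> closed_elems e \<and> u \<le> p \<and> k \<le> v}"

definition completely_join_irreducible :: "'b::complete_lattice \<Rightarrow> bool" where
  "completely_join_irreducible x \<longleftrightarrow> (\<forall>S. x = Sup S \<longrightarrow> x \<in> S)"

end

theory Submission
  imports Defs
begin

text \<open>
  A completely join-irreducible element x of the canonical extension is closed, and it is
  prime with respect to A: x \<le> a \<squnion> b implies x \<le> a or x \<le> b. Conversely, a closed,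
  non-bottom element that is prime with respect to A is completely join-irreducible, by
  compactness. So for y, z completely join-irreducible it suffices to show that y \<cdot> z is
  closed and prime. Both follow from one approximation property: if y \<cdot> z lies below an
  open element p, then there are a, b in A with y \<le> a, z \<le> a\b and b \<le> p (compactness
  applied to the closed element z below the open element y\p, which is a directed join
  since y is closed). Conversely y \<le> a and z \<le> a\b give y \<cdot> z \<le> b. Primeness of y \<cdot> z
  then comes from that of z together with a\(c \<squnion> d) \<le> a\c \<squnion> a\d.
\<close>

lemma ldiv_mono_right:
  assumes "residuation_algebra ldiv rdiv" and "b \<le> c"
  shows "ldiv a b \<le> ldiv a c"
proof -
  have "ldiv a b = inf (ldiv a b) (ldiv a c)"
    using assms unfolding residuation_algebra_def by (metis inf.absorb1)
  then show ?thesis by (metis inf.cobounded2)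
qed

lemma ldiv_antimono_left:
  assumes "residuation_algebra ldiv rdiv" and "a' \<le> a"
  shows "ldiv a c \<le> ldiv a' c"
proof -
  have galois: "\<And>a b c. b \<le> ldiv a c \<longleftrightarrow> a \<le> rdiv c b"
    using assms(1) unfolding residuation_algebra_def by blast
  have "a \<le> rdiv c (ldiv a c)" using galois by blast
  then have "a' \<le> rdiv c (ldiv a c)" using assms(2) by (rule order_trans[rotated])
  then show ?thesis using galois by blast
qed

lemma inf_closed_finite_lower_bound:
  fixes F :: "'a::semilattice_inf set"
  assumes "F \<noteq> {}" and "\<And>c d. c \<in> F \<Longrightarrow> d \<in> F \<Longrightarrow> inf c d \<in> F"
  shows "finite F' \<Longrightarrow> F' \<subseteq> F \<Longrightarrow> \<exists>c\<in>F. \<forall>d\<in>F'. c \<le> d"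
proof (induction F' rule: finite_induct)
  case empty
  then show ?case using assms(1) by blast
next
  case (insert x G)
  then obtain c where c: "c \<in> F" "\<forall>d\<in>G. c \<le> d" by blast
  have "inf c x \<in> F" using assms(2) c(1) insert.prems by blast
  moreover have "\<forall>d\<in>insert x G. inf c x \<le> d" using c(2) by (auto intro: le_infI1)
  ultimately show ?case by blast
qed

lemma inf_closed_image_inf:
  fixes F :: "'a::semilattice_inf set"
  assumes "\<And>c d. c \<in> F \<Longrightarrow> d \<in> F \<Longrightarrow> inf c d \<in> F"
    and "c \<in> (\<lambda>c. inf c a) ` F" and "d \<in> (\<lambda>c. inf c a) ` F"
  shows "inf c d \<in> (\<lambda>c. inf c a) ` F"
proof -
  obtain c' d' where "c' \<in> F" "d' \<in> F" "c = inf c' a" "d = inf d' a" using assms(2,3) by blast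
  moreover from this have "inf c d = inf (inf c' d') a" by (simp add: inf_aci)
  ultimately show ?thesis using assms(1) by blast
qed

context
  fixes e :: "'a::{distrib_lattice,bounded_lattice} \<Rightarrow> 'b::complete_lattice"
  assumes CE: "canonical_extension e"
begin

lemma e_inf: "e (inf a b) = inf (e a) (e b)"
  using CE unfolding canonical_extension_def by blast

lemma e_sup: "e (sup a b) = sup (e a) (e b)"
  using CE unfolding canonical_extension_def by blast

lemma e_top: "e top = top"
  using CE unfolding canonical_extension_def by blast

lemma e_bot: "e bot = bot"
  using CE unfolding canonical_extension_def by blast

lemma e_le_iff: "e a \<le> e b \<longleftrightarrow> a \<le> b"
proof
  assume "e a \<le> e b"
  then have "e (inf a b) = e a" by (simp add: e_inf inf.absorb1)
  then have "inf a b = a"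
    using CE unfolding canonical_extension_def by (meson injD)
  then show "a \<le> b" by (metis inf.cobounded2)
next
  assume "a \<le> b"
  then show "e a \<le> e b" by (metis e_inf inf.absorb1 inf.cobounded2)
qed

lemma e_mono: "a \<le> b \<Longrightarrow> e a \<le> e b"
  by (simp add: e_le_iff)

lemma Sup_closed_elems_dense: "\<exists>\<S>. u = Sup ((\<lambda>S. Inf (e ` S)) ` \<S>)"
  using CE unfolding canonical_extension_def by blast

lemma Inf_open_elems_dense: "\<exists>\<T>. u = Inf ((\<lambda>T. Sup (e ` T)) ` \<T>)"
  using CE unfolding canonical_extension_def by blast

lemma le_if_open_upper_bounds:
  assumes "\<And>T. v \<le> Sup (e ` T) \<Longrightarrow> u \<le> Sup (e ` T)"
  shows "u \<le> v"
proof -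
  obtain \<T> where v: "v = Inf ((\<lambda>T. Sup (e ` T)) ` \<T>)"
    using Inf_open_elems_dense by blast
  have "u \<le> Sup (e ` T)" if "T \<in> \<T>" for T
    using assms v that by (metis INF_lower)
  then show ?thesis unfolding v by (rule INF_greatest)
qed

lemma finite_Sup_in_image: "finite T \<Longrightarrow> \<exists>j. e j = Sup (e ` T)"
proof (induction T rule: finite_induct)
  case empty
  then show ?case using e_bot by auto
next
  case (insert x F)
  then obtain j where "e j = Sup (e ` F)" by blast
  then have "e (sup x j) = Sup (e ` insert x F)" by (simp add: e_sup)
  then show ?case by blast
qed

lemma compact_inf_closed:
  assumes "F \<noteq> {}" and "\<And>c d. c \<in> F \<Longrightarrow> d \<in> F \<Longrightarrow> inf c d \<in> F"
    and "Inf (e ` F) \<le> Sup (e ` T)"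
  shows "\<exists>c\<in>F. \<exists>T'\<subseteq>T. finite T' \<and> e c \<le> Sup (e ` T')"
proof -
  obtain S' T' where S'T': "finite S'" "finite T'" "S' \<subseteq> F" "T' \<subseteq> T"
      "Inf (e ` S') \<le> Sup (e ` T')"
    using CE assms(3) unfolding canonical_extension_def by meson
  obtain c where "c \<in> F" "\<forall>d\<in>S'. c \<le> d"
    using inf_closed_finite_lower_bound[OF assms(1,2) S'T'(1,3)] by blast
  then have "e c \<le> Inf (e ` S')" by (auto intro: INF_greatest e_mono)
  with \<open>c \<in> F\<close> S'T' show ?thesis by (meson order_trans)
qed

lemma compact_inf_closed_le:
  assumes "F \<noteq> {}" and "\<And>c d. c \<in> F \<Longrightarrow> d \<in> F \<Longrightarrow> inf c d \<in> F"
    and "Inf (e ` F) \<le> Sup (e ` T)"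
  shows "\<exists>c\<in>F. e c \<le> Sup (e ` T)"
  using compact_inf_closed[OF assms] by (meson SUP_subset_mono order_refl order_trans)

lemma closed_elems_iff: "k \<in> closed_elems e \<longleftrightarrow> k = Inf (e ` {a. k \<le> e a})"
proof
  assume "k \<in> closed_elems e"
  then obtain S where k: "k = Inf (e ` S)" unfolding closed_elems_def by blast
  then have "S \<subseteq> {a. k \<le> e a}" by (auto intro: INF_lower)
  then have "Inf (e ` {a. k \<le> e a}) \<le> k" unfolding k by (rule INF_superset_mono) simp
  moreover have "k \<le> Inf (e ` {a. k \<le> e a})" by (auto intro: INF_greatest)
  ultimately show "k = Inf (e ` {a. k \<le> e a})" by simp
qed (auto simp: closed_elems_def)

lemma closed_elem_if_approximated:
  assumes "\<And>T. k \<le> Sup (e ` T) \<Longrightarrow> \<exists>c. k \<le> e c \<and> e c \<le> Sup (e ` T)"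
  shows "k \<in> closed_elems e"
proof -
  have "Inf (e ` {c. k \<le> e c}) \<le> k"
  proof (rule le_if_open_upper_bounds)
    fix T assume "k \<le> Sup (e ` T)"
    then obtain c where c: "k \<le> e c" "e c \<le> Sup (e ` T)" using assms by blast
    then have "Inf (e ` {c. k \<le> e c}) \<le> e c" by (simp add: INF_lower)
    then show "Inf (e ` {c. k \<le> e c}) \<le> Sup (e ` T)" using c(2) by (rule order_trans)
  qed
  moreover have "k \<le> Inf (e ` {c. k \<le> e c})" by (auto intro: INF_greatest)
  ultimately show ?thesis by (simp add: closed_elems_iff)
qed

lemma upset_nonempty: "{a. k \<le> e a} \<noteq> {}"
proof -
  have "top \<in> {a. k \<le> e a}" by (simp add: e_top)
  then show ?thesis by blast
qed

lemma upset_inf_closed: "c \<in> {a. k \<le> e a} \<Longrightarrow> d \<in> {a. k \<le> e a} \<Longrightarrow> inf c d \<in> {a. k \<le> e a}"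
  by (simp add: e_inf)

lemma join_irreducible_closed:
  assumes "completely_join_irreducible x"
  shows "x \<in> closed_elems e"
proof -
  obtain \<S> where "x = Sup ((\<lambda>S. Inf (e ` S)) ` \<S>)"
    using Sup_closed_elems_dense by blast
  then have "x \<in> (\<lambda>S. Inf (e ` S)) ` \<S>"
    using assms unfolding completely_join_irreducible_def by blast
  then show ?thesis unfolding closed_elems_def by blast
qed

lemma join_irreducible_prime:
  assumes ji: "completely_join_irreducible x" and le: "x \<le> e (sup a b)"
  shows "x \<le> e a \<or> x \<le> e b"
proof -
  define F where "F = {c. x \<le> e c}"
  have x: "x = Inf (e ` F)"
    using join_irreducible_closed[OF ji] unfolding F_def closed_elems_iff .
  have F_inf_closed: "\<And>c d. c \<in> F \<Longrightarrow> d \<in> F \<Longrightarrow> inf c d \<in> F"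
    unfolding F_def by (simp add: e_inf)
  have "top \<in> F" unfolding F_def by (simp add: e_top)
  \<comment> \<open>x_a and x_b are x \<sqinter> a and x \<sqinter> b; compactness makes x their join.\<close>
  define x_a where "x_a = Inf (e ` (\<lambda>c. inf c a) ` F)"
  define x_b where "x_b = Inf (e ` (\<lambda>c. inf c b) ` F)"
  have restrict_compact: "\<exists>c\<in>F. e (inf c a') \<le> Sup (e ` T)"
    if "Inf (e ` (\<lambda>c. inf c a') ` F) \<le> Sup (e ` T)" for a' T
  proof -
    have "(\<lambda>c. inf c a') ` F \<noteq> {}" using \<open>top \<in> F\<close> by blast
    then show ?thesis
      using compact_inf_closed_le[OF _ inf_closed_image_inf[OF F_inf_closed] that] by blast
  qed
  have "x \<le> sup x_a x_b"
  proof (rule le_if_open_upper_bounds)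
    fix T assume T: "sup x_a x_b \<le> Sup (e ` T)"
    obtain c1 c2 where c: "c1 \<in> F" "c2 \<in> F"
        "e (inf c1 a) \<le> Sup (e ` T)" "e (inf c2 b) \<le> Sup (e ` T)"
      using restrict_compact T unfolding x_a_def x_b_def by (meson le_supE)
    have "x \<le> e (inf (inf c1 c2) (sup a b))"
      using c le F_inf_closed unfolding F_def by (simp add: e_inf)
    also have "\<dots> \<le> e (sup (inf c1 a) (inf c2 b))"
      by (rule e_mono) (unfold inf_sup_distrib1, intro sup_mono inf_mono, simp_all)
    also have "\<dots> \<le> Sup (e ` T)" using c by (simp add: e_sup)
    finally show "x \<le> Sup (e ` T)" .
  qed
  moreover have "x_a \<le> x" "x_b \<le> x"
    unfolding x x_a_def x_b_def image_image by (rule INF_mono, blast intro: e_mono inf.cobounded1)+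
  ultimately have "x = Sup {x_a, x_b}" by (simp add: antisym)
  then have "x \<in> {x_a, x_b}" using ji unfolding completely_join_irreducible_def by blast
  moreover have "x_a \<le> e a" "x_b \<le> e b"
    unfolding x_a_def x_b_def using \<open>top \<in> F\<close> by (metis INF_lower image_eqI inf_top_left)+
  ultimately show ?thesis by auto
qed

lemma le_Sup_not_above:
  assumes "\<not> k \<le> u"
  shows "u \<le> Sup (e ` {a. \<not> k \<le> e a})"
proof -
  obtain \<S> where u: "u = Sup ((\<lambda>S. Inf (e ` S)) ` \<S>)"
    using Sup_closed_elems_dense by blast
  have "Inf (e ` S) \<le> Sup (e ` {a. \<not> k \<le> e a})" if "S \<in> \<S>" for S
  proof -
    have "Inf (e ` S) \<le> u" unfolding u using that by (rule SUP_upper)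
    then have "\<not> k \<le> Inf (e ` S)" using assms by (meson order_trans)
    then obtain s where s: "s \<in> S" "\<not> k \<le> e s" by (meson INF_greatest)
    then have "Inf (e ` S) \<le> e s" by (simp add: INF_lower)
    also have "\<dots> \<le> Sup (e ` {a. \<not> k \<le> e a})" using s by (simp add: SUP_upper)
    finally show ?thesis .
  qed
  then show ?thesis unfolding u by (rule SUP_least)
qed

lemma prime_le_finite_Sup:
  assumes prime: "\<And>c d. k \<le> e (sup c d) \<Longrightarrow> k \<le> e c \<or> k \<le> e d" and "k \<noteq> bot"
  shows "finite W \<Longrightarrow> k \<le> Sup (e ` W) \<Longrightarrow> \<exists>w\<in>W. k \<le> e w"
proof (induction W rule: finite_induct)
  case empty
  then show ?case using \<open>k \<noteq> bot\<close> by (simp add: bot_unique)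
next
  case (insert x F)
  obtain j where j: "e j = Sup (e ` F)" using finite_Sup_in_image insert(1) by blast
  then have "k \<le> e (sup x j)" using insert(4) by (simp add: e_sup)
  then show ?case using prime insert j by fastforce
qed

lemma closed_prime_join_irreducible:
  assumes closed: "k \<in> closed_elems e"
    and prime: "\<And>c d. k \<le> e (sup c d) \<Longrightarrow> k \<le> e c \<or> k \<le> e d" and "k \<noteq> bot"
  shows "completely_join_irreducible k"
  unfolding completely_join_irreducible_def
proof (intro allI impI)
  fix S assume k: "k = Sup S"
  show "k \<in> S"
  proof (rule ccontr)
    assume "k \<notin> S"
    have "s \<le> Sup (e ` {a. \<not> k \<le> e a})" if "s \<in> S" for s
    proof (rule le_Sup_not_above)
      show "\<not> k \<le> s" using that \<open>k \<notin> S\<close> k by (metis Sup_upper antisym)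
    qed
    then have "k \<le> Sup (e ` {a. \<not> k \<le> e a})"
      using k by (simp add: Sup_least)
    with closed have "Inf (e ` {a. k \<le> e a}) \<le> Sup (e ` {a. \<not> k \<le> e a})"
      unfolding closed_elems_iff by (rule ord_eq_le_trans[OF sym])
    then obtain c T where c: "k \<le> e c" and T: "T \<subseteq> {a. \<not> k \<le> e a}" "finite T"
        "e c \<le> Sup (e ` T)"
      using compact_inf_closed[OF upset_nonempty upset_inf_closed] by blast
    have "k \<le> Sup (e ` T)" using c T(3) by (rule order_trans)
    then obtain w where "w \<in> T" "k \<le> e w"
      using prime_le_finite_Sup[OF prime \<open>k \<noteq> bot\<close> T(2)] by blast
    then show False using T(1) by blast
  qed
qed

end

lemma e_ldiv_le_ldiv_pi:
  assumes "u \<le> e a"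
  shows "e (ldiv a b) \<le> ldiv_pi e ldiv u (e b)"
  unfolding ldiv_pi_def
proof (rule Inf_greatest)
  fix w assume "w \<in> {ldiv_KO e ldiv k p |k p.
      k \<in> closed_elems e \<and> p \<in> open_elems e \<and> k \<le> u \<and> e b \<le> p}"
  then obtain k p where w: "w = ldiv_KO e ldiv k p" and "k \<le> u" "e b \<le> p" by blast
  with assms have "k \<le> e a" by (meson order_trans)
  with \<open>e b \<le> p\<close> show "e (ldiv a b) \<le> w"
    unfolding w ldiv_KO_def by (intro Sup_upper) blast
qed

lemma ldiv_pi_le_ldiv_KO:
  assumes "k \<in> closed_elems e" and "p \<in> open_elems e"
  shows "ldiv_pi e ldiv k p \<le> ldiv_KO e ldiv k p"
  unfolding ldiv_pi_def using assms by (intro Inf_lower) blast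

lemma ldiv_approximants_directed:
  assumes RA: "residuation_algebra ldiv rdiv" and CE: "canonical_extension e"
  shows "finite T \<Longrightarrow> T \<subseteq> {ldiv a b |a b. k \<le> e a \<and> e b \<le> p} \<Longrightarrow>
    \<exists>a b. k \<le> e a \<and> e b \<le> p \<and> (\<forall>t\<in>T. t \<le> ldiv a b)"
proof (induction T rule: finite_induct)
  case empty
  have "k \<le> e top" "e bot \<le> p" by (simp_all add: e_top[OF CE] e_bot[OF CE])
  then show ?case by blast
next
  case (insert t T)
  then obtain a b where ab: "k \<le> e a" "e b \<le> p" "\<forall>t\<in>T. t \<le> ldiv a b" by blast
  obtain a' b' where t: "t = ldiv a' b'" "k \<le> e a'" "e b' \<le> p" using insert.prems by blast
  have "k \<le> e (inf a a')" "e (sup b b') \<le> p"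
    using ab t by (simp_all add: e_inf[OF CE] e_sup[OF CE])
  moreover have "ldiv a b \<le> ldiv (inf a a') (sup b b')" "ldiv a' b' \<le> ldiv (inf a a') (sup b b')"
    by (rule order_trans[OF ldiv_mono_right[OF RA] ldiv_antimono_left[OF RA]], simp_all)+
  ultimately have "k \<le> e (inf a a') \<and> e (sup b b') \<le> p \<and>
      (\<forall>s\<in>insert t T. s \<le> ldiv (inf a a') (sup b b'))"
    using ab(3) t(1) by (auto intro: order_trans)
  then show ?case by blast
qed

context
  fixes ldiv rdiv :: "'a::{distrib_lattice,bounded_lattice} \<Rightarrow> 'a \<Rightarrow> 'a"
    and e :: "'a \<Rightarrow> 'b::complete_lattice"
    and dot :: "'b \<Rightarrow> 'b \<Rightarrow> 'b"
  assumes RA: "residuation_algebra ldiv rdiv"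
    and CE: "canonical_extension e"
    and residuated: "\<And>u v w. v \<le> ldiv_pi e ldiv u w \<longleftrightarrow> dot u v \<le> w"
begin

lemma dot_le_if_le_ldiv:
  assumes "y \<le> e a" and "z \<le> e (ldiv a b)"
  shows "dot y z \<le> e b"
proof -
  have "z \<le> ldiv_pi e ldiv y (e b)"
    using assms(2) e_ldiv_le_ldiv_pi[where e = e, OF assms(1)] by (rule order_trans)
  then show ?thesis by (rule residuated[THEN iffD1])
qed

lemma dot_le_open_approximated:
  assumes y: "y \<in> closed_elems e" and z: "z \<in> closed_elems e"
    and le_open: "dot y z \<le> Sup (e ` P)"
  shows "\<exists>a b. y \<le> e a \<and> z \<le> e (ldiv a b) \<and> e b \<le> Sup (e ` P)"
proof -
  define p where "p = Sup (e ` P)"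
  define D where "D = {ldiv a b |a b. y \<le> e a \<and> e b \<le> p}"
  have "Inf (e ` {c. z \<le> e c}) = z" using z unfolding closed_elems_iff[OF CE] by (rule sym)
  also have "z \<le> ldiv_pi e ldiv y p" using le_open unfolding p_def by (rule residuated[THEN iffD2])
  also have "\<dots> \<le> ldiv_KO e ldiv y p"
    using y by (rule ldiv_pi_le_ldiv_KO) (auto simp: p_def open_elems_def)
  also have "\<dots> = Sup (e ` D)"
    unfolding ldiv_KO_def D_def by (rule arg_cong[where f = Sup]) blast
  finally obtain c T where c: "z \<le> e c" and T: "T \<subseteq> D" "finite T" "e c \<le> Sup (e ` T)"
    using compact_inf_closed[OF CE upset_nonempty[OF CE] upset_inf_closed[OF CE]] by blast
  obtain a b where ab: "y \<le> e a" "e b \<le> p" "\<forall>t\<in>T. t \<le> ldiv a b"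
    using ldiv_approximants_directed[OF RA CE T(2)] T(1) unfolding D_def by blast
  have "Sup (e ` T) \<le> e (ldiv a b)" using ab(3) by (auto intro: SUP_least e_mono[OF CE])
  with c T(3) have "z \<le> e (ldiv a b)" by (meson order_trans)
  with ab show ?thesis unfolding p_def by blast
qed

lemma dot_closed:
  assumes "y \<in> closed_elems e" and "z \<in> closed_elems e"
  shows "dot y z \<in> closed_elems e"
proof (rule closed_elem_if_approximated[OF CE])
  fix T assume "dot y z \<le> Sup (e ` T)"
  then obtain a b where "y \<le> e a" "z \<le> e (ldiv a b)" "e b \<le> Sup (e ` T)"
    using dot_le_open_approximated assms by blast
  then show "\<exists>c. dot y z \<le> e c \<and> e c \<le> Sup (e ` T)"
    using dot_le_if_le_ldiv by blast
qed

lemma dot_prime: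
  assumes dist: "\<And>a b c. ldiv a (sup b c) \<le> sup (ldiv a b) (ldiv a c)"
    and y: "y \<in> closed_elems e" and z: "completely_join_irreducible z"
    and le: "dot y z \<le> e (sup c d)"
  shows "dot y z \<le> e c \<or> dot y z \<le> e d"
proof -
  obtain a b where ab: "y \<le> e a" "z \<le> e (ldiv a b)" "e b \<le> e (sup c d)"
    using dot_le_open_approximated[OF y join_irreducible_closed[OF CE z], of "{sup c d}"] le
    by auto
  then have "ldiv a b \<le> ldiv a (sup c d)" by (simp add: e_le_iff[OF CE] ldiv_mono_right[OF RA])
  then have "ldiv a b \<le> sup (ldiv a c) (ldiv a d)" using dist by (rule order_trans)
  then have "z \<le> e (sup (ldiv a c) (ldiv a d))"
    using ab(2) e_mono[OF CE] by (meson order_trans)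
  then have "z \<le> e (ldiv a c) \<or> z \<le> e (ldiv a d)"
    using join_irreducible_prime[OF CE z] by blast
  then show ?thesis using dot_le_if_le_ldiv ab(1) by blast
qed

lemma dot_join_irreducible:
  assumes "\<And>a b c. ldiv a (sup b c) \<le> sup (ldiv a b) (ldiv a c)"
    and "completely_join_irreducible y" and "completely_join_irreducible z"
    and "dot y z \<noteq> bot"
  shows "completely_join_irreducible (dot y z)"
proof (rule closed_prime_join_irreducible[OF CE])
  show "dot y z \<in> closed_elems e"
    using dot_closed join_irreducible_closed[OF CE] assms(2,3) by blast
  show "dot y z \<le> e c \<or> dot y z \<le> e d" if "dot y z \<le> e (sup c d)" for c d
    using dot_prime[OF assms(1) join_irreducible_closed[OF CE assms(2)] assms(3) that] .
qed fact

end

theorem proposition2p5: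
  fixes ldiv rdiv :: "'a::{distrib_lattice,bounded_lattice} \<Rightarrow> 'a \<Rightarrow> 'a"
    and e :: "'a \<Rightarrow> 'b::complete_lattice"
    and dot :: "'b \<Rightarrow> 'b \<Rightarrow> 'b"
  assumes RA: "residuation_algebra ldiv rdiv"
    and CE: "canonical_extension e"
    and dist: "\<forall>a b c. ldiv a (sup b c) \<le> sup (ldiv a b) (ldiv a c)"
    and dot_join: "\<forall>u S. dot u (Sup S) = Sup (dot u ` S)"
    and join_dot: "\<forall>v S. dot (Sup S) v = Sup ((\<lambda>u. dot u v) ` S)"
    and adj: "\<forall>u v w. (v \<le> ldiv_pi e ldiv u w \<longleftrightarrow> dot u v \<le> w)
                   \<and> (dot u v \<le> w \<longleftrightarrow> u \<le> rdiv_pi e rdiv w v)"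
  shows "\<forall>y z. completely_join_irreducible y \<and> completely_join_irreducible z \<longrightarrow>
           completely_join_irreducible (dot y z) \<or> dot y z = bot"
proof (intro allI impI)
  fix y z :: 'b
  assume "completely_join_irreducible y \<and> completely_join_irreducible z"
  moreover have "\<And>u v w. v \<le> ldiv_pi e ldiv u w \<longleftrightarrow> dot u v \<le> w" using adj by blast
  moreover have "\<And>a b c. ldiv a (sup b c) \<le> sup (ldiv a b) (ldiv a c)" using dist by blast
  ultimately show "completely_join_irreducible (dot y z) \<or> dot y z = bot"
    using dot_join_irreducible[OF RA CE] by blast
qed

end
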